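(* Let $N\ge 1$. Inside $S^{N-1}_{\mathbb R,+}$ the following equalities hold: $$S^{N-1}_{\mathbb R}\cap\bar S^{N-1}_{\mathbb R}=S^{N-1,0}_{\mathbb R},\qquad S^{N-1}_{\mathbb R}\cap\bar S^{N-1}_{\mathbb R,*}=S^{N-1,1}_{\mathbb R},$$ $$S^{N-1}_{\mathbb R,*}\cap\bar S^{N-1}_{\mathbb R}=\bar S^{N-1,1}_{\mathbb R},\qquad S^{N-1}_{\mathbb R,*}\cap\bar S^{N-1}_{\mathbb R,*}=S^{N-1,1}_{\mathbb R,*}.$$ Moreover one has the inclusions $S^{N-1,0}_{\mathbb R}\subset S^{N-1,1}_{\mathbb R}\subset S^{N-1}_{\mathbb R}$, $S^{N-1,0}_{\mathbb R}\subset\bar S^{N-1,1}_{\mathbb R}\subset\bar S^{N-1}_{\mathbb R}$, $\bar S^{N-1,1}_{\mathbb R}\subset S^{N-1,1}_{\mathbb R,*}\subset S^{N-1}_{\mathbb R,*}$, $S^{N-1,1}_{\mathbb R}\subset S^{N-1,1}_{\mathbb R,*}\subset\bar S^{N-1}_{\mathbb R,*}$, $\bar S^{N-1}_{\mathbb R}\subset\bar S^{N-1}_{\mathbb R,*}\subset S^{N-1}_{\mathbb R,+}$ and $S^{N-1}_{\mathbb R}\subset S^{N-1}_{\mathbb R,*}\subset S^{N-1}_{\mathbb R,+}$.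
   Context: $C(S^{N-1}_{\mathbb R,+})$ denotes the universal $C^*$-algebra generated by self-adjoint elements $x_1,\dots,x_N$ subject to $\sum_i x_i^2=1$. A noncommutative subspace $X\subset S^{N-1}_{\mathbb R,+}$ is given by a quotient $C(X)$ of $C(S^{N-1}_{\mathbb R,+})$ by relations among the standard coordinates $x_i$; $X\subset Y$ means $C(X)$ is a quotient of $C(Y)$ compatibly with the $x_i$, and $X\cap Y$ is obtained by imposing both sets of relations. Subspheres: $S^{N-1}_{\mathbb R}$: $x_ix_j=x_jx_i$ for all $i,j$ (the usual sphere); $\bar S^{N-1}_{\mathbb R}$: $x_ix_j=-x_jx_i$ for all $i\ne j$; $S^{N-1}_{\mathbb R,*}$: $x_ix_jx_k=x_kx_jx_i$ for all $i,j,k$; $\bar S^{N-1}_{\mathbb R,*}$: $x_ix_jx_k=-x_kx_jx_i$ for $i,j,k$ pairwise distinct and $x_ix_jx_k=x_kx_jx_i$ otherwise. For $d\in\{1,\dots,N\}$, the polygonal versions $S^{N-1,d-1}_{\mathbb R}$, $\bar S^{N-1,d-1}_{\mathbb R}$, $S^{N-1,d-1}_{\mathbb R,*}$, $\bar S^{N-1,d-1}_{\mathbb R,*}$, $S^{N-1,d-1}_{\mathbb R,+}$ are obtained from $S^{N-1}_{\mathbb R}$, $\bar S^{N-1}_{\mathbb R}$, $S^{N-1}_{\mathbb R,*}$, $\bar S^{N-1}_{\mathbb R,*}$, $S^{N-1}_{\mathbb R,+}$ respectively by additionally imposing $x_{i_0}x_{i_1}\cdots x_{i_d}=0$ for all pairwise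 distinct $i_0,\dots,i_d$ (vacuous when $d=N$). *)

theory Defs
  imports Complex_Main
begin

text \<open>Unital C*-algebras, rendered as a predicate on the operations of a real Banach algebra
  type 'a: a complex scalar multiplication extending the real one, and an involution star.\<close>

definition cstar_algebra ::
  "(complex \<Rightarrow> 'a::{real_normed_algebra_1,banach} \<Rightarrow> 'a) \<Rightarrow> ('a \<Rightarrow> 'a) \<Rightarrow> bool" where
  "cstar_algebra scC star \<longleftrightarrow>
     (\<forall>r a. scC (complex_of_real r) a = scaleR r a) \<and>
     (\<forall>c d a. scC (c + d) a = scC c a + scC d a) \<and>
     (\<forall>c a b. scC c (a + b) = scC c a + scC c b) \<and>
     (\<forall>c d a. scC c (scC d a) = scC (c * d) a) \<and>
     (\<forall>c a b. scC c (a * b) = scC c a * b \<and> scC c (a * b) = a * scC c b) \<and>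
     (\<forall>c a. norm (scC c a) = cmod c * norm a) \<and>
     (\<forall>a. star (star a) = a) \<and>
     (\<forall>a b. star (a + b) = star a + star b) \<and>
     (\<forall>c a. star (scC c a) = scC (cnj c) (star a)) \<and>
     (\<forall>a b. star (a * b) = star b * star a) \<and>
     (\<forall>a. norm (star a * a) = (norm a)\<^sup>2)"

definition sphere_plus :: "('a::ring_1 \<Rightarrow> 'a) \<Rightarrow> nat \<Rightarrow> (nat \<Rightarrow> 'a) \<Rightarrow> bool" where
  "sphere_plus star N x \<longleftrightarrow> (\<forall>i<N. star (x i) = x i) \<and> (\<Sum>i<N. x i * x i) = 1"

definition rel_comm :: "nat \<Rightarrow> (nat \<Rightarrow> 'a::ring_1) \<Rightarrow> bool" where
  "rel_comm N x \<longleftrightarrow> (\<forall>i<N. \<forall>j<N. x i * x j = x j * x i)"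

definition rel_anticomm :: "nat \<Rightarrow> (nat \<Rightarrow> 'a::ring_1) \<Rightarrow> bool" where
  "rel_anticomm N x \<longleftrightarrow> (\<forall>i<N. \<forall>j<N. i \<noteq> j \<longrightarrow> x i * x j = - (x j * x i))"

definition rel_halfcomm :: "nat \<Rightarrow> (nat \<Rightarrow> 'a::ring_1) \<Rightarrow> bool" where
  "rel_halfcomm N x \<longleftrightarrow> (\<forall>i<N. \<forall>j<N. \<forall>k<N. x i * x j * x k = x k * x j * x i)"

definition rel_halfanti :: "nat \<Rightarrow> (nat \<Rightarrow> 'a::ring_1) \<Rightarrow> bool" where
  "rel_halfanti N x \<longleftrightarrow> (\<forall>i<N. \<forall>j<N. \<forall>k<N.
     (if i \<noteq> j \<and> j \<noteq> k \<and> i \<noteq> k then x i * x j * x k = - (x k * x j * x i)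
      else x i * x j * x k = x k * x j * x i))"

definition rel_vanish :: "nat \<Rightarrow> nat \<Rightarrow> (nat \<Rightarrow> 'a::ring_1) \<Rightarrow> bool" where
  "rel_vanish N d x \<longleftrightarrow> (\<forall>f::nat \<Rightarrow> nat. (\<forall>m\<le>d. f m < N) \<and> inj_on f {0..d} \<longrightarrow>
       prod_list (map (\<lambda>m. x (f m)) [0..<Suc d]) = 0)"

definition S_R :: "nat \<Rightarrow> (nat \<Rightarrow> 'a::ring_1) \<Rightarrow> bool" where
  "S_R N x \<longleftrightarrow> rel_comm N x"
definition Sbar_R :: "nat \<Rightarrow> (nat \<Rightarrow> 'a::ring_1) \<Rightarrow> bool" where
  "Sbar_R N x \<longleftrightarrow> rel_anticomm N x"
definition S_Rstar :: "nat \<Rightarrow> (nat \<Rightarrow> 'a::ring_1) \<Rightarrow> bool" where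
  "S_Rstar N x \<longleftrightarrow> rel_halfcomm N x"
definition Sbar_Rstar :: "nat \<Rightarrow> (nat \<Rightarrow> 'a::ring_1) \<Rightarrow> bool" where
  "Sbar_Rstar N x \<longleftrightarrow> rel_halfanti N x"

text \<open>Polygonal versions: the paper's S^{N-1,d-1} is written with parameter d.\<close>
definition S_R_poly :: "nat \<Rightarrow> nat \<Rightarrow> (nat \<Rightarrow> 'a::ring_1) \<Rightarrow> bool" where
  "S_R_poly N d x \<longleftrightarrow> rel_comm N x \<and> rel_vanish N d x"
definition Sbar_R_poly :: "nat \<Rightarrow> nat \<Rightarrow> (nat \<Rightarrow> 'a::ring_1) \<Rightarrow> bool" where
  "Sbar_R_poly N d x \<longleftrightarrow> rel_anticomm N x \<and> rel_vanish N d x"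
definition S_Rstar_poly :: "nat \<Rightarrow> nat \<Rightarrow> (nat \<Rightarrow> 'a::ring_1) \<Rightarrow> bool" where
  "S_Rstar_poly N d x \<longleftrightarrow> rel_halfcomm N x \<and> rel_vanish N d x"

end

theory Submission
  imports Defs
begin

text \<open>Commutation together with
  anticommutation gives \<open>2 x\<^sub>i x\<^sub>j = 0\<close> for \<open>i \<noteq> j\<close>, and the two half-commutation rules together
  give \<open>2 x\<^sub>i x\<^sub>j x\<^sub>k = 0\<close> for distinct \<open>i, j, k\<close>. Conversely, once all products of three distinct
  coordinates vanish, the two half-commutation rules differ only on terms that are zero, so
  they coincide. Finally anticommutation implies the anti-half-commutation rule, since
  reversing a word of three distinct pairwise anticommuting letters takes three
  transpositions, while a letter anticommuting with another commutes with its square.\<close>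

lemma equal_neg_zero_real_vector:
  fixes a :: "'a::real_vector"
  shows "a = - a \<longleftrightarrow> a = 0"
proof
  assume "a = - a"
  then have "scaleR 2 a = 0" by (metis add.right_inverse scaleR_2)
  then show "a = 0" by simp
qed simp

lemma anticommute_imp_commute_square:
  fixes a b :: "'a::ring_1"
  assumes "a * b = - (b * a)"
  shows "a * a * b = b * a * a"
  using assms by (metis mult.assoc mult_minus_left mult_minus_right minus_minus)

lemma anticommute_triple_reverse:
  fixes a b c :: "'a::ring_1"
  assumes "a * b = - (b * a)" and "a * c = - (c * a)" and "b * c = - (c * b)"
  shows "a * b * c = - (c * b * a)"
  using assms by (metis mult.assoc mult_minus_left mult_minus_right minus_minus)

lemma rel_vanish_iff_distinct_lists:
  "rel_vanish N d x \<longleftrightarrow>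
     (\<forall>ks. length ks = Suc d \<and> distinct ks \<and> set ks \<subseteq> {..<N} \<longrightarrow> prod_list (map x ks) = 0)"
proof
  assume vanish: "rel_vanish N d x"
  show "\<forall>ks. length ks = Suc d \<and> distinct ks \<and> set ks \<subseteq> {..<N} \<longrightarrow>
      prod_list (map x ks) = 0"
  proof (intro allI impI)
    fix ks :: "nat list"
    assume ks: "length ks = Suc d \<and> distinct ks \<and> set ks \<subseteq> {..<N}"
    have "ks ! m < N" if "m \<le> d" for m
    proof -
      from that ks have "ks ! m \<in> set ks" by simp
      with ks show ?thesis by auto
    qed
    moreover have "inj_on ((!) ks) {0..d}"
      using ks by (simp add: inj_on_def nth_eq_iff_index_eq)
    ultimately have "prod_list (map (\<lambda>m. x (ks ! m)) [0..<Suc d]) = 0"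
      using vanish unfolding rel_vanish_def by blast
    also have "map (\<lambda>m. x (ks ! m)) [0..<Suc d] = map x ks"
      using ks by (simp add: list_eq_iff_nth_eq del: upt_Suc)
    finally show "prod_list (map x ks) = 0" .
  qed
next
  assume lists: "\<forall>ks. length ks = Suc d \<and> distinct ks \<and> set ks \<subseteq> {..<N} \<longrightarrow>
      prod_list (map x ks) = 0"
  show "rel_vanish N d x"
    unfolding rel_vanish_def
  proof (intro allI impI)
    fix f :: "nat \<Rightarrow> nat"
    assume "(\<forall>m\<le>d. f m < N) \<and> inj_on f {0..d}"
    then have "length (map f [0..<Suc d]) = Suc d \<and> distinct (map f [0..<Suc d])
        \<and> set (map f [0..<Suc d]) \<subseteq> {..<N}"
      by (auto simp: distinct_map atLeastLessThanSuc_atLeastAtMost simp del: upt_Suc)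
    with lists have "prod_list (map x (map f [0..<Suc d])) = 0"
      by blast
    then show "prod_list (map (\<lambda>m. x (f m)) [0..<Suc d]) = 0"
      by (simp add: comp_def del: upt_Suc)
  qed
qed

lemma rel_vanish_1_iff:
  "rel_vanish N 1 x \<longleftrightarrow> (\<forall>i<N. \<forall>j<N. i \<noteq> j \<longrightarrow> x i * x j = 0)"
  unfolding rel_vanish_iff_distinct_lists
proof (intro iffI allI impI)
  fix i j
  assume "\<forall>ks. length ks = Suc 1 \<and> distinct ks \<and> set ks \<subseteq> {..<N} \<longrightarrow>
      prod_list (map x ks) = 0"
    and "i < N" "j < N" "i \<noteq> j"
  then show "x i * x j = 0" by (auto dest: spec[of _ "[i, j]"])
qed (auto simp: length_Suc_conv)

lemma rel_vanish_2_iff: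
  "rel_vanish N 2 x \<longleftrightarrow>
     (\<forall>i<N. \<forall>j<N. \<forall>k<N. i \<noteq> j \<and> j \<noteq> k \<and> i \<noteq> k \<longrightarrow> x i * x j * x k = 0)"
  unfolding rel_vanish_iff_distinct_lists
proof (intro iffI allI impI)
  fix i j k
  assume "\<forall>ks. length ks = Suc 2 \<and> distinct ks \<and> set ks \<subseteq> {..<N} \<longrightarrow>
      prod_list (map x ks) = 0"
    and "i < N" "j < N" "k < N" "i \<noteq> j \<and> j \<noteq> k \<and> i \<noteq> k"
  then show "x i * x j * x k = 0" by (auto simp: mult.assoc dest: spec[of _ "[i, j, k]"])
qed (auto simp: length_Suc_conv numeral_2_eq_2 mult.assoc)

lemma rel_comm_imp_halfcomm:
  fixes x :: "nat \<Rightarrow> 'a::ring_1"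
  assumes "rel_comm N x"
  shows "rel_halfcomm N x"
  unfolding rel_halfcomm_def
proof (intro allI impI)
  fix i j k assume "i < N" "j < N" "k < N"
  with assms have "x i * x j = x j * x i" "x i * x k = x k * x i" "x j * x k = x k * x j"
    unfolding rel_comm_def by blast+
  then show "x i * x j * x k = x k * x j * x i"
    by (metis mult.assoc)
qed

lemma rel_anticomm_imp_halfanti:
  fixes x :: "nat \<Rightarrow> 'a::ring_1"
  assumes "rel_anticomm N x"
  shows "rel_halfanti N x"
  unfolding rel_halfanti_def
proof (intro allI impI)
  fix i j k assume "i < N" "j < N" "k < N"
  with assms have anti: "x p * x q = - (x q * x p)"
    if "p \<in> {i, j, k}" "q \<in> {i, j, k}" "p \<noteq> q" for p q
    using that unfolding rel_anticomm_def by blast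
  consider "i \<noteq> j \<and> j \<noteq> k \<and> i \<noteq> k" | "i = k" | "i = j" "i \<noteq> k" | "j = k" "i \<noteq> k"
    by blast
  then show "if i \<noteq> j \<and> j \<noteq> k \<and> i \<noteq> k then x i * x j * x k = - (x k * x j * x i)
      else x i * x j * x k = x k * x j * x i"
  proof cases
    case 1
    then show ?thesis
      using anticommute_triple_reverse[OF anti[of i j] anti[of i k] anti[of j k]] by simp
  next
    case 3
    then show ?thesis
      using anticommute_imp_commute_square[OF anti[of i k]] by simp
  next
    case 4
    then show ?thesis
      using anticommute_imp_commute_square[OF anti[of k i]] by simp
  qed simp
qed

lemma rel_vanish_1_imp_anticomm:
  "rel_vanish N 1 x \<Longrightarrow> rel_anticomm N x"
  unfolding rel_vanish_1_iff rel_anticomm_def by simp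

lemma rel_vanish_1_imp_vanish_2:
  "rel_vanish N 1 x \<Longrightarrow> rel_vanish N 2 x"
  unfolding rel_vanish_1_iff rel_vanish_2_iff by simp

lemma rel_vanish_2_imp_halfcomm_iff_halfanti:
  assumes "rel_vanish N 2 x"
  shows "rel_halfcomm N x \<longleftrightarrow> rel_halfanti N x"
proof -
  have "(if i \<noteq> j \<and> j \<noteq> k \<and> i \<noteq> k then x i * x j * x k = - (x k * x j * x i)
      else x i * x j * x k = x k * x j * x i) \<longleftrightarrow> x i * x j * x k = x k * x j * x i"
    if "i < N" "j < N" "k < N" for i j k
  proof (cases "i \<noteq> j \<and> j \<noteq> k \<and> i \<noteq> k")
    case True
    with assms that have "x i * x j * x k = 0" "x k * x j * x i = 0"
      unfolding rel_vanish_2_iff by blast+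
    then show ?thesis by simp
  qed auto
  then show ?thesis
    unfolding rel_halfcomm_def rel_halfanti_def by blast
qed

lemma rel_comm_anticomm_imp_vanish_1:
  fixes x :: "nat \<Rightarrow> 'a::real_algebra_1"
  assumes "rel_comm N x" and "rel_anticomm N x"
  shows "rel_vanish N 1 x"
  unfolding rel_vanish_1_iff
proof (intro allI impI)
  fix i j assume "i < N" "j < N" "i \<noteq> j"
  with assms have "x i * x j = x j * x i" and "x i * x j = - (x j * x i)"
    unfolding rel_comm_def rel_anticomm_def by blast+
  then show "x i * x j = 0"
    using equal_neg_zero_real_vector[of "x i * x j"] by simp
qed

lemma rel_halfcomm_halfanti_imp_vanish_2:
  fixes x :: "nat \<Rightarrow> 'a::real_algebra_1"
  assumes "rel_halfcomm N x" and "rel_halfanti N x"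
  shows "rel_vanish N 2 x"
  unfolding rel_vanish_2_iff
proof (intro allI impI)
  fix i j k assume "i < N" "j < N" "k < N" "i \<noteq> j \<and> j \<noteq> k \<and> i \<noteq> k"
  with assms have "x i * x j * x k = x k * x j * x i"
    and "x i * x j * x k = - (x k * x j * x i)"
    unfolding rel_halfcomm_def rel_halfanti_def by (blast, metis)
  then show "x i * x j * x k = 0"
    using equal_neg_zero_real_vector[of "x i * x j * x k"] by simp
qed

theorem proposition1p2:
  fixes scC :: "complex \<Rightarrow> 'a::{real_normed_algebra_1,banach} \<Rightarrow> 'a"
    and star :: "'a \<Rightarrow> 'a"
    and N :: nat
  assumes "N \<ge> 1"
    and "cstar_algebra scC star"
  shows
    "\<forall>x. sphere_plus star N x \<longrightarrow>
       ((S_R N x \<and> Sbar_R N x) \<longleftrightarrow> S_R_poly N 1 x) \<and>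
       ((S_R N x \<and> Sbar_Rstar N x) \<longleftrightarrow> S_R_poly N 2 x) \<and>
       ((S_Rstar N x \<and> Sbar_R N x) \<longleftrightarrow> Sbar_R_poly N 2 x) \<and>
       ((S_Rstar N x \<and> Sbar_Rstar N x) \<longleftrightarrow> S_Rstar_poly N 2 x) \<and>
       (S_R_poly N 1 x \<longrightarrow> S_R_poly N 2 x) \<and> (S_R_poly N 2 x \<longrightarrow> S_R N x) \<and>
       (S_R_poly N 1 x \<longrightarrow> Sbar_R_poly N 2 x) \<and> (Sbar_R_poly N 2 x \<longrightarrow> Sbar_R N x) \<and>
       (Sbar_R_poly N 2 x \<longrightarrow> S_Rstar_poly N 2 x) \<and> (S_Rstar_poly N 2 x \<longrightarrow> S_Rstar N x) \<and>
       (S_R_poly N 2 x \<longrightarrow> S_Rstar_poly N 2 x) \<and> (S_Rstar_poly N 2 x \<longrightarrow> Sbar_Rstar N x) \<and>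
       (Sbar_R N x \<longrightarrow> Sbar_Rstar N x) \<and> (S_R N x \<longrightarrow> S_Rstar N x)"
  unfolding S_R_def Sbar_R_def S_Rstar_def Sbar_Rstar_def
    S_R_poly_def Sbar_R_poly_def S_Rstar_poly_def
  by (intro allI impI)
    (meson rel_comm_imp_halfcomm rel_anticomm_imp_halfanti
      rel_vanish_1_imp_anticomm rel_vanish_1_imp_vanish_2
      rel_vanish_2_imp_halfcomm_iff_halfanti
      rel_comm_anticomm_imp_vanish_1 rel_halfcomm_halfanti_imp_vanish_2)

end
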